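(* Let $f,g:[0,\infty)\to[0,\infty)$, let $0<a<b<\infty$, and suppose $fg$ is Lebesgue integrable on $[a,b]$. Let $q>1$ and $(\alpha_1,m_1),(\alpha_2,m_2)\in(0,1]^2$. Suppose $f^q$ is $(\alpha_1,m_1)$-GA-convex on $[0,\max\{a^{1/m_1},b\}]$ and $g^{q/(q-1)}$ is $(\alpha_2,m_2)$-GA-convex on $[0,\max\{a^{1/m_2},b\}]$. Then \begin{multline*} \int_a^b f(x)g(x)\,dx\le(\ln b-\ln a)\Bigl\{m_1f^q(a^{1/m_1})L(a,b)+G(\alpha_1,1)\bigl[f^q(b)-m_1f^q(a^{1/m_1})\bigr]\Bigr\}^{1/q}\\ \times\Bigl\{m_2g^{q/(q-1)}(a^{1/m_2})L(a,b)+G(\alpha_2,1)\bigl[g^{q/(q-1)}(b)-m_2g^{q/(q-1)}(a^{1/m_2})\bigr]\Bigr\}^{1-1/q}. \end{multline*}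
   Context: For $c>0$, $h:[0,c]\to\mathbb{R}$ and $(\alpha,m)\in(0,1]^2$, $h$ is called $(\alpha,m)$-GA-convex on $[0,c]$ if $h\bigl(x^\lambda y^{m(1-\lambda)}\bigr)\le\lambda^\alpha h(x)+m(1-\lambda^\alpha)h(y)$ for all $x,y\in[0,c]$ and all $\lambda\in[0,1]$ (with the convention $0^0=1$). For fixed $0<a<b$ and $\ell\ge0$, $\alpha>0$, set $G(\alpha,\ell)=\int_0^1 t^\alpha a^{\ell(1-t)}b^{\ell t}\,dt$. For $x,y>0$, $x\neq y$, the logarithmic mean is $L(x,y)=\frac{y-x}{\ln y-\ln x}$. *)

theory Defs
  imports "HOL-Analysis.Analysis"
begin

text \<open>Real power with the convention 0^0 = 1 (Isabelle's powr has 0 powr 0 = 0).\<close>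
definition rpow :: "real \<Rightarrow> real \<Rightarrow> real" where
  "rpow x t = (if t = 0 then 1 else x powr t)"

definition GA_convex :: "real \<Rightarrow> real \<Rightarrow> real \<Rightarrow> (real \<Rightarrow> real) \<Rightarrow> bool" where
  "GA_convex \<alpha> m c h \<longleftrightarrow>
     (\<forall>x\<in>{0..c}. \<forall>y\<in>{0..c}. \<forall>t\<in>{0..1}.
        h (rpow x t * rpow y (m * (1 - t)))
          \<le> rpow t \<alpha> * h x + m * (1 - rpow t \<alpha>) * h y)"

definition Gfun :: "real \<Rightarrow> real \<Rightarrow> real \<Rightarrow> real \<Rightarrow> real" where
  "Gfun a b \<alpha> l = integral {0..1} (\<lambda>t. rpow t \<alpha> * rpow a (l * (1 - t)) * rpow b (l * t))"

definition logmean :: "real \<Rightarrow> real \<Rightarrow> real" where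
  "logmean x y = (y - x) / (ln y - ln x)"

end

theory Submission
  imports Defs
begin

text \<open>Every x in [a, b] is x = a^(1-t) b^t = b^t (a^(1/m))^(m(1-t)) with
  t = ln(x/a)/ln(b/a) \<in> [0,1], so (\<alpha>,m)-GA-convexity of h bounds h x by
  m h(a^(1/m)) + t^\<alpha> (h b - m h(a^(1/m))).  Applied to f^q and g^(q/(q-1)),
  these majorants are continuous, and the substitution x = a^(1-t) b^t turns their
  integrals into (ln b - ln a)(C L(a,b) + G(\<alpha>,1) D).  Holder's inequality for the
  majorants then gives the bound.\<close>

lemma powr_mult_powr_le_convex_comb:
  fixes x y \<theta> :: real
  assumes "0 \<le> \<theta>" "\<theta> \<le> 1" "0 \<le> x" "0 \<le> y"
  shows "x powr \<theta> * y powr (1 - \<theta>) \<le> \<theta> * x + (1 - \<theta>) * y"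
proof (cases "x = 0 \<or> y = 0")
  case True
  then show ?thesis using assms by auto
next
  case False
  then show ?thesis using Youngs_inequality_0[of \<theta> "1 - \<theta>" x y] assms by auto
qed

text \<open>The positive shift d avoids dividing by a vanishing integral in the normalisation.\<close>

lemma Holder_integral_shifted:
  fixes F G :: "real \<Rightarrow> real"
  assumes \<theta>: "0 < \<theta>" "\<theta> < 1"
    and cont: "continuous_on {a..b} F" "continuous_on {a..b} G"
    and nonneg: "\<And>x. x \<in> {a..b} \<Longrightarrow> F x \<ge> 0" "\<And>x. x \<in> {a..b} \<Longrightarrow> G x \<ge> 0"
    and d: "d > 0"
  shows "integral {a..b} (\<lambda>x. F x powr \<theta> * G x powr (1 - \<theta>))
           \<le> (integral {a..b} F + d) powr \<theta> * (integral {a..b} G + d) powr (1 - \<theta>)"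
proof -
  define I where "I = integral {a..b} F + d"
  define J where "J = integral {a..b} G + d"
  have int_nonneg: "integral {a..b} F \<ge> 0" "integral {a..b} G \<ge> 0"
    using nonneg cont by (auto intro!: integral_nonneg integrable_continuous_interval)
  then have IJ: "I > 0" "J > 0"
    using d by (auto simp: I_def J_def)
  define K where "K = I powr \<theta> * J powr (1 - \<theta>)"
  have K: "K > 0"
    using IJ by (simp add: K_def)
  have pointwise: "F x powr \<theta> * G x powr (1 - \<theta>) / K \<le> \<theta> * (F x / I) + (1 - \<theta>) * (G x / J)"
    if x: "x \<in> {a..b}" for x
  proof -
    have "F x powr \<theta> * G x powr (1 - \<theta>) / K = (F x / I) powr \<theta> * (G x / J) powr (1 - \<theta>)"
      using IJ nonneg[OF x] by (simp add: K_def powr_divide)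
    also have "\<dots> \<le> \<theta> * (F x / I) + (1 - \<theta>) * (G x / J)"
      using \<theta> IJ nonneg[OF x] by (intro powr_mult_powr_le_convex_comb) auto
    finally show ?thesis .
  qed
  have cont_prod: "continuous_on {a..b} (\<lambda>x. F x powr \<theta> * G x powr (1 - \<theta>))"
    using nonneg \<theta> by (intro continuous_intros continuous_on_powr' cont) auto
  have "integral {a..b} (\<lambda>x. F x powr \<theta> * G x powr (1 - \<theta>)) / K
          = integral {a..b} (\<lambda>x. F x powr \<theta> * G x powr (1 - \<theta>) / K)"
    by simp
  also have "\<dots> \<le> integral {a..b} (\<lambda>x. \<theta> * (F x / I) + (1 - \<theta>) * (G x / J))"
    using pointwise K IJ
    by (intro integral_le integrable_continuous_interval continuous_intros cont_prod cont) auto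
  also have "\<dots> = \<theta> * (integral {a..b} F / I) + (1 - \<theta>) * (integral {a..b} G / J)"
    using cont IJ by (subst integral_add) (auto intro!: integrable_continuous_interval continuous_intros)
  also have "\<dots> \<le> \<theta> * 1 + (1 - \<theta>) * 1"
    using \<theta> IJ d by (intro add_mono mult_left_mono) (auto simp: I_def J_def)
  finally show ?thesis
    using K by (simp add: K_def I_def J_def divide_le_eq)
qed

lemma Holder_integral:
  fixes F G :: "real \<Rightarrow> real"
  assumes \<theta>: "0 < \<theta>" "\<theta> < 1"
    and cont: "continuous_on {a..b} F" "continuous_on {a..b} G"
    and nonneg: "\<And>x. x \<in> {a..b} \<Longrightarrow> F x \<ge> 0" "\<And>x. x \<in> {a..b} \<Longrightarrow> G x \<ge> 0"
  shows "integral {a..b} (\<lambda>x. F x powr \<theta> * G x powr (1 - \<theta>))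
           \<le> integral {a..b} F powr \<theta> * integral {a..b} G powr (1 - \<theta>)"
proof (rule tendsto_le[of "at_right 0"])
  let ?I = "integral {a..b} F" and ?J = "integral {a..b} G"
  have int_nonneg: "?I \<ge> 0" "?J \<ge> 0"
    using nonneg cont by (auto intro!: integral_nonneg integrable_continuous_interval)
  have "((\<lambda>d. (?I + d) powr \<theta> * (?J + d) powr (1 - \<theta>)) \<longlongrightarrow>
          (?I + 0) powr \<theta> * (?J + 0) powr (1 - \<theta>)) (at_right 0)"
    using \<theta> int_nonneg
    by (intro tendsto_mult tendsto_powr' tendsto_intros)
       (auto simp: eventually_at_right_field intro!: exI[of _ 1])
  then show "((\<lambda>d. (?I + d) powr \<theta> * (?J + d) powr (1 - \<theta>)) \<longlongrightarrow>
               ?I powr \<theta> * ?J powr (1 - \<theta>)) (at_right 0)"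
    by simp
  show "\<forall>\<^sub>F d in at_right 0. integral {a..b} (\<lambda>x. F x powr \<theta> * G x powr (1 - \<theta>))
                             \<le> (?I + d) powr \<theta> * (?J + d) powr (1 - \<theta>)"
    using Holder_integral_shifted[OF assms] by (auto simp: eventually_at_right_field intro!: exI[of _ 1])
qed simp_all

lemma set_integral_mult_le_Holder_majorants:
  fixes f g P Q :: "real \<Rightarrow> real"
  assumes \<theta>: "0 < \<theta>" "\<theta> < 1"
    and int: "set_integrable lborel {a..b} (\<lambda>x. f x * g x)"
    and cont: "continuous_on {a..b} P" "continuous_on {a..b} Q"
    and nonneg: "\<And>x. x \<in> {a..b} \<Longrightarrow> f x \<ge> 0" "\<And>x. x \<in> {a..b} \<Longrightarrow> g x \<ge> 0"
    and major: "\<And>x. x \<in> {a..b} \<Longrightarrow> f x powr (1 / \<theta>) \<le> P x"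
               "\<And>x. x \<in> {a..b} \<Longrightarrow> g x powr (1 / (1 - \<theta>)) \<le> Q x"
  shows "(LINT x:{a..b}|lborel. f x * g x)
           \<le> integral {a..b} P powr \<theta> * integral {a..b} Q powr (1 - \<theta>)"
proof -
  have root_le: "y \<le> R powr e" if "y \<ge> 0" "e > 0" "y powr (1 / e) \<le> R" for y R e :: real
  proof -
    have "y = (y powr (1 / e)) powr e"
      using that by (simp add: powr_powr)
    also have "\<dots> \<le> R powr e"
      using that by (intro powr_mono2) auto
    finally show ?thesis .
  qed
  have PQ_nonneg: "P x \<ge> 0" "Q x \<ge> 0" if "x \<in> {a..b}" for x
    using major[OF that] by (meson order.trans powr_ge_zero)+
  have cont_prod: "continuous_on {a..b} (\<lambda>x. P x powr \<theta> * Q x powr (1 - \<theta>))"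
    using PQ_nonneg \<theta> by (intro continuous_intros continuous_on_powr' cont) auto
  note int_prod = borel_integrable_atLeastAtMost'[OF cont_prod]
  have "(LINT x:{a..b}|lborel. f x * g x) \<le> (LINT x:{a..b}|lborel. P x powr \<theta> * Q x powr (1 - \<theta>))"
  proof (rule set_integral_mono[OF int int_prod])
    fix x assume x: "x \<in> {a..b}"
    show "f x * g x \<le> P x powr \<theta> * Q x powr (1 - \<theta>)"
      using \<theta> nonneg[OF x] major[OF x] PQ_nonneg[OF x] by (intro mult_mono root_le) auto
  qed
  also have "\<dots> = integral {a..b} (\<lambda>x. P x powr \<theta> * Q x powr (1 - \<theta>))"
    by (rule set_borel_integral_eq_integral(2)[OF int_prod])
  also have "\<dots> \<le> integral {a..b} P powr \<theta> * integral {a..b} Q powr (1 - \<theta>)"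
    using \<theta> PQ_nonneg by (intro Holder_integral cont) auto
  finally show ?thesis .
qed

definition log_ratio :: "real \<Rightarrow> real \<Rightarrow> real \<Rightarrow> real" where
  "log_ratio a b x = (ln x - ln a) / (ln b - ln a)"

lemma log_ratio_mem:
  assumes "0 < a" "a < b" "x \<in> {a..b}"
  shows "log_ratio a b x \<in> {0..1}"
  using assms by (auto simp: log_ratio_def divide_simps)

lemma continuous_on_log_ratio_powr:
  assumes "0 < a" "a < b" "\<alpha> > 0"
  shows "continuous_on {a..b} (\<lambda>x. log_ratio a b x powr \<alpha>)"
  unfolding log_ratio_def using assms
  by (intro continuous_on_powr' continuous_intros) (auto simp: divide_simps)

lemma powr_log_ratio:
  assumes "0 < a" "a < b" "x > 0"
  shows "a powr (1 - log_ratio a b x) * b powr log_ratio a b x = x"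
proof -
  have "a powr (1 - log_ratio a b x) * b powr log_ratio a b x
          = exp (ln a + log_ratio a b x * (ln b - ln a))"
    using assms by (simp add: powr_def exp_add[symmetric] algebra_simps)
  then show ?thesis
    using assms by (simp add: log_ratio_def)
qed

lemma integral_log_ratio_powr:
  assumes ab: "0 < a" "a < b" and \<alpha>: "\<alpha> > 0"
  shows "integral {a..b} (\<lambda>x. log_ratio a b x powr \<alpha>) = (ln b - ln a) * Gfun a b \<alpha> 1"
proof -
  define L where "L = ln b - ln a"
  have L: "L > 0" using ab by (simp add: L_def)
  define \<gamma> where "\<gamma> t = a * exp (t * L)" for t
  have \<gamma>_eq: "\<gamma> t = a powr (1 - t) * b powr t" for t
  proof -
    have "\<gamma> t = exp (ln a + t * L)"
      using ab by (simp add: \<gamma>_def exp_add)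
    then show ?thesis
      using ab by (simp add: powr_def L_def exp_add[symmetric] algebra_simps)
  qed
  have \<gamma>_ends: "\<gamma> 0 = a" "\<gamma> 1 = b"
    using ab by (auto simp: \<gamma>_eq)
  have \<gamma>_range: "\<gamma> ` {0..1} \<subseteq> {a..b}"
  proof
    fix y assume "y \<in> \<gamma> ` {0..1}"
    then obtain t where "t \<in> {0..1}" "y = \<gamma> t" by auto
    then have "exp (0 * L) \<le> exp (t * L)" "exp (t * L) \<le> exp (1 * L)" "y = \<gamma> t"
      using L by (auto intro: mult_right_mono)
    then show "y \<in> {a..b}"
      using ab \<gamma>_ends unfolding \<gamma>_def by auto
  qed
  have \<gamma>_deriv: "(\<gamma> has_field_derivative (\<gamma> t * L)) (at t within {0..1})" for t
    unfolding \<gamma>_def by (auto intro!: derivative_eq_intros)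
  have integrand: "(\<lambda>t. (\<gamma> t * L) *\<^sub>R log_ratio a b (\<gamma> t) powr \<alpha>)
                   = (\<lambda>t. L * (rpow t \<alpha> * rpow a (1 * (1 - t)) * rpow b (1 * t)))"
  proof
    fix t
    have "log_ratio a b (\<gamma> t) = t"
      using ab L by (simp add: \<gamma>_def log_ratio_def ln_mult L_def)
    then show "(\<gamma> t * L) *\<^sub>R log_ratio a b (\<gamma> t) powr \<alpha>
                 = L * (rpow t \<alpha> * rpow a (1 * (1 - t)) * rpow b (1 * t))"
      using ab \<alpha> by (simp add: rpow_def \<gamma>_eq)
  qed
  have "((\<lambda>t. (\<gamma> t * L) *\<^sub>R log_ratio a b (\<gamma> t) powr \<alpha>)
          has_integral integral {a..b} (\<lambda>x. log_ratio a b x powr \<alpha>)) {0..1}"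
    using has_integral_substitution[OF _ _ \<gamma>_range continuous_on_log_ratio_powr[OF ab \<alpha>] \<gamma>_deriv]
    by (simp add: \<gamma>_ends less_imp_le[OF ab(2)])
  then have "integral {a..b} (\<lambda>x. log_ratio a b x powr \<alpha>)
               = integral {0..1} (\<lambda>t. L * (rpow t \<alpha> * rpow a (1 * (1 - t)) * rpow b (1 * t)))"
    unfolding integrand by (rule integral_unique[symmetric])
  then show ?thesis
    by (simp add: Gfun_def L_def)
qed

lemma integral_affine_log_ratio_powr:
  assumes ab: "0 < a" "a < b" and \<alpha>: "\<alpha> > 0"
  shows "integral {a..b} (\<lambda>x. C + log_ratio a b x powr \<alpha> * D)
           = (ln b - ln a) * (C * logmean a b + Gfun a b \<alpha> 1 * D)"
proof -
  have "integral {a..b} (\<lambda>x. C + log_ratio a b x powr \<alpha> * D)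
          = integral {a..b} (\<lambda>x. C) + integral {a..b} (\<lambda>x. log_ratio a b x powr \<alpha> * D)"
    using continuous_on_log_ratio_powr[OF ab \<alpha>]
    by (intro integral_add) (auto intro!: integrable_continuous_interval continuous_intros)
  also have "\<dots> = (b - a) * C + integral {a..b} (\<lambda>x. log_ratio a b x powr \<alpha>) * D"
    using ab by simp
  also have "\<dots> = (ln b - ln a) * (C * logmean a b + Gfun a b \<alpha> 1 * D)"
    using ab by (simp add: integral_log_ratio_powr[OF ab \<alpha>] logmean_def distrib_left)
  finally show ?thesis .
qed

lemma GA_convex_le_log_ratio:
  fixes h :: "real \<Rightarrow> real"
  assumes cv: "GA_convex \<alpha> m c h"
    and ab: "0 < a" "a < b" and \<alpha>: "\<alpha> > 0" and m: "m > 0"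
    and c: "a powr (1 / m) \<le> c" "b \<le> c" and x: "x \<in> {a..b}"
  shows "h x \<le> m * h (a powr (1 / m)) + log_ratio a b x powr \<alpha> * (h b - m * h (a powr (1 / m)))"
proof -
  define t where "t = log_ratio a b x"
  have t: "t \<in> {0..1}"
    using log_ratio_mem[OF ab x] by (simp add: t_def)
  have "rpow b t * rpow (a powr (1 / m)) (m * (1 - t)) = a powr (1 - t) * b powr t"
    using ab m by (simp add: rpow_def powr_powr)
  also have "\<dots> = x"
    using powr_log_ratio[of a b x] ab x by (simp add: t_def)
  finally have x_eq: "rpow b t * rpow (a powr (1 / m)) (m * (1 - t)) = x" .
  have "b \<in> {0..c}" "a powr (1 / m) \<in> {0..c}"
    using ab c by auto
  then have "h x \<le> rpow t \<alpha> * h b + m * (1 - rpow t \<alpha>) * h (a powr (1 / m))"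
    using cv t unfolding GA_convex_def x_eq[symmetric] by blast
  then show ?thesis
    using \<alpha> by (simp add: t_def rpow_def algebra_simps)
qed

lemma GA_convex_integral_majorant:
  fixes h :: "real \<Rightarrow> real"
  assumes cv: "GA_convex \<alpha> m (max (a powr (1 / m)) b) h"
    and ab: "0 < a" "a < b" and \<alpha>: "\<alpha> > 0" and m: "m > 0"
  obtains P where "continuous_on {a..b} P" "\<And>x. x \<in> {a..b} \<Longrightarrow> h x \<le> P x"
    "integral {a..b} P = (ln b - ln a) * (m * h (a powr (1 / m)) * logmean a b
                           + Gfun a b \<alpha> 1 * (h b - m * h (a powr (1 / m))))"
proof
  let ?P = "\<lambda>x. m * h (a powr (1 / m)) + log_ratio a b x powr \<alpha> * (h b - m * h (a powr (1 / m)))"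
  show "continuous_on {a..b} ?P"
    by (intro continuous_on_add continuous_on_const continuous_on_mult_right
        continuous_on_log_ratio_powr[OF ab \<alpha>])
  show "h x \<le> ?P x" if "x \<in> {a..b}" for x
    using GA_convex_le_log_ratio[OF cv ab \<alpha> m _ _ that] by simp
  show "integral {a..b} ?P = (ln b - ln a) * (m * h (a powr (1 / m)) * logmean a b
                              + Gfun a b \<alpha> 1 * (h b - m * h (a powr (1 / m))))"
    by (rule integral_affine_log_ratio_powr[OF ab \<alpha>])
qed

theorem theorem3p6:
  fixes f g :: "real \<Rightarrow> real" and a b q \<alpha>1 m1 \<alpha>2 m2 :: real
  assumes f_nonneg: "\<forall>x\<ge>0. f x \<ge> 0" and g_nonneg: "\<forall>x\<ge>0. g x \<ge> 0"
    and ab: "0 < a" "a < b"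
    and int: "set_integrable lborel {a..b} (\<lambda>x. f x * g x)"
    and q: "q > 1"
    and par1: "\<alpha>1 \<in> {0<..1}" "m1 \<in> {0<..1}"
    and par2: "\<alpha>2 \<in> {0<..1}" "m2 \<in> {0<..1}"
    and cf: "GA_convex \<alpha>1 m1 (max (a powr (1 / m1)) b) (\<lambda>x. f x powr q)"
    and cg: "GA_convex \<alpha>2 m2 (max (a powr (1 / m2)) b) (\<lambda>x. g x powr (q / (q - 1)))"
  shows "(LINT x:{a..b}|lborel. f x * g x) \<le>
     (ln b - ln a)
     * (m1 * f (a powr (1 / m1)) powr q * logmean a b
        + Gfun a b \<alpha>1 1 * (f b powr q - m1 * f (a powr (1 / m1)) powr q)) powr (1 / q)
     * (m2 * g (a powr (1 / m2)) powr (q / (q - 1)) * logmean a b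
        + Gfun a b \<alpha>2 1 * (g b powr (q / (q - 1)) - m2 * g (a powr (1 / m2)) powr (q / (q - 1)))) powr (1 - 1 / q)"
proof -
  define L where "L = ln b - ln a"
  define K1 where "K1 = m1 * f (a powr (1 / m1)) powr q * logmean a b
                         + Gfun a b \<alpha>1 1 * (f b powr q - m1 * f (a powr (1 / m1)) powr q)"
  define K2 where "K2 = m2 * g (a powr (1 / m2)) powr (q / (q - 1)) * logmean a b
                         + Gfun a b \<alpha>2 1 * (g b powr (q / (q - 1)) - m2 * g (a powr (1 / m2)) powr (q / (q - 1)))"
  have L: "L > 0" using ab by (simp add: L_def)
  have \<theta>: "0 < 1 / q" "1 / q < 1" "1 / (1 / q) = q" "1 / (1 - 1 / q) = q / (q - 1)"
    using q by (auto simp: field_simps)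
  obtain P where P: "continuous_on {a..b} P" "\<And>x. x \<in> {a..b} \<Longrightarrow> f x powr q \<le> P x"
    and int_P: "integral {a..b} P = L * K1"
    using GA_convex_integral_majorant[OF cf ab] par1 unfolding L_def K1_def by auto
  obtain Q where Q: "continuous_on {a..b} Q" "\<And>x. x \<in> {a..b} \<Longrightarrow> g x powr (q / (q - 1)) \<le> Q x"
    and int_Q: "integral {a..b} Q = L * K2"
    using GA_convex_integral_majorant[OF cg ab] par2 unfolding L_def K2_def by auto
  have "integral {a..b} P \<ge> 0" "integral {a..b} Q \<ge> 0"
    using P Q by (auto intro!: integral_nonneg integrable_continuous_interval)
      (meson atLeastAtMost_iff order.trans powr_ge_zero)+
  then have K: "K1 \<ge> 0" "K2 \<ge> 0"
    using L by (simp_all add: int_P int_Q zero_le_mult_iff)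
  have "(LINT x:{a..b}|lborel. f x * g x) \<le> integral {a..b} P powr (1 / q) * integral {a..b} Q powr (1 - 1 / q)"
    using f_nonneg g_nonneg ab P Q \<theta>
    by (intro set_integral_mult_le_Holder_majorants[OF _ _ int]) auto
  also have "\<dots> = L powr (1 / q) * L powr (1 - 1 / q) * K1 powr (1 / q) * K2 powr (1 - 1 / q)"
    using L K by (simp add: int_P int_Q powr_mult)
  also have "\<dots> = L * K1 powr (1 / q) * K2 powr (1 - 1 / q)"
    using L by (simp add: powr_add[symmetric])
  finally show ?thesis
    unfolding L_def K1_def K2_def .
qed

end
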